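(* Let $n\ge1$. Then $Inn(Q_n)$ is an elementary abelian $2$-group of order $2^{2^n-2}$. Moreover, every $f\in Inn(Q_n)$ is a product of disjoint transpositions of the form $(x,-x)$, $x\in Q_n$.
   Context: Cayley--Dickson loops: $Q_0=\{1,-1\}\subset\mathbb{R}$ with conjugation $x^*=x$. For $n\ge1$, $Q_n=\{(x,0),(x,1)\mid x\in Q_{n-1}\}$ with multiplication $(x,0)(y,0)=(xy,0)$, $(x,0)(y,1)=(yx,1)$, $(x,1)(y,0)=(xy^*,1)$, $(x,1)(y,1)=(-y^*x,0)$ and conjugation $(x,0)^*=(x^*,0)$, $(x,1)^*=(-x,1)$, where $-(x,a)=(-x,a)$. $Q_n$ is a loop of order $2^{n+1}$ with neutral element $1=(1,0,\dots,0)$; $-1=(-1,0,\dots,0)$ and $-x=(-1)x$. For a loop $Q$, $L_x(a)=xa$, $R_x(a)=ax$, $Mlt(Q)=\langle L_x,R_x\mid x\in Q\rangle$ and $Inn(Q)=\{f\in Mlt(Q)\mid f(1)=1\}$. *)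

theory Defs
  imports Complex_Main "HOL-Algebra.Bij" "HOL-Algebra.Generated_Groups"
begin

text \<open>Elements of the Cayley--Dickson loops: an element of Q_0 is a real number
 (Sc r), an element of Q_n (n \<ge> 1) is a pair (x,a) with x in Q_(n-1) and a in {0,1},
 encoded as Pr x a with a :: bool (False = 0, True = 1).\<close>
datatype cd = Sc real | Pr cd bool

fun cd_neg :: "cd \<Rightarrow> cd" where
  "cd_neg (Sc r) = Sc (- r)"
| "cd_neg (Pr x a) = Pr (cd_neg x) a"

fun cd_conj :: "cd \<Rightarrow> cd" where
  "cd_conj (Sc r) = Sc r"
| "cd_conj (Pr x False) = Pr (cd_conj x) False"
| "cd_conj (Pr x True) = Pr (cd_neg x) True"

lemma size_cd_neg[simp]: "size (cd_neg x) = size x"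
  by (induction x) auto

lemma size_cd_conj[simp]: "size (cd_conj x) = size x"
  by (induction x rule: cd_conj.induct) auto

function cd_mult :: "cd \<Rightarrow> cd \<Rightarrow> cd" where
  "cd_mult (Sc r) (Sc s) = Sc (r * s)"
| "cd_mult (Pr x False) (Pr y False) = Pr (cd_mult x y) False"
| "cd_mult (Pr x False) (Pr y True) = Pr (cd_mult y x) True"
| "cd_mult (Pr x True) (Pr y False) = Pr (cd_mult x (cd_conj y)) True"
| "cd_mult (Pr x True) (Pr y True) = Pr (cd_neg (cd_mult (cd_conj y) x)) False"
| "cd_mult (Sc r) (Pr y b) = undefined"
| "cd_mult (Pr x a) (Sc s) = undefined"
  by pat_completeness auto
termination
  by (relation "measure (\<lambda>(x, y). size x + size y)") auto

fun Q :: "nat \<Rightarrow> cd set" where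
  "Q 0 = {Sc 1, Sc (-1)}"
| "Q (Suc n) = {Pr x a | x a. x \<in> Q n}"

fun cd_one :: "nat \<Rightarrow> cd" where
  "cd_one 0 = Sc 1"
| "cd_one (Suc n) = Pr (cd_one n) False"

definition Lmap :: "nat \<Rightarrow> cd \<Rightarrow> cd \<Rightarrow> cd" where
  "Lmap n x = restrict (\<lambda>a. cd_mult x a) (Q n)"

definition Rmap :: "nat \<Rightarrow> cd \<Rightarrow> cd \<Rightarrow> cd" where
  "Rmap n x = restrict (\<lambda>a. cd_mult a x) (Q n)"

definition Mlt :: "nat \<Rightarrow> (cd \<Rightarrow> cd) set" where
  "Mlt n = generate (BijGroup (Q n)) ((Lmap n ` Q n) \<union> (Rmap n ` Q n))"

definition Inn :: "nat \<Rightarrow> (cd \<Rightarrow> cd) set" where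
  "Inn n = {f \<in> Mlt n. f (cd_one n) = cd_one n}"

definition InnGroup :: "nat \<Rightarrow> (cd \<Rightarrow> cd) monoid" where
  "InnGroup n = (BijGroup (Q n))\<lparr>carrier := Inn n\<rparr>"

end

theory Submission
  imports Defs
begin

text \<open>
  Every element of the Cayley--Dickson loop Q_n has the form \<open>\<plusminus>e_v\<close>, where the bit
  vector \<open>v\<close> of length n (its "basis index") determines the element up to sign, and
  the basis index of a product is the XOR of the basis indices of the factors.

  The proof proceeds as follows.
  (1) Arithmetic of Q_n: negation and conjugation are compatible with the product,
      the commutation rule \<open>yx = \<plusminus>xy\<close>, and the alternative laws \<open>x(xy) = (yx)x = \<plusminus>y\<close>.
  (2) Every element of Mlt(Q_n) is an "admissible" bijection: it commutes with negation
      and translates basis indices.  Hence an inner mapping, fixing 1, maps every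
      \<open>x\<close> to \<open>\<plusminus>x\<close>; so Inn(Q_n) is an elementary abelian 2-group.
  (3) For n \<ge> 2 the number of positive elements sent to negative ones has even parity
      on all of Mlt(Q_n) (it is even for every generator and additive mod 2);
      for n = 1 the loop is an abelian group and Inn(Q_1) is trivial.
  (4) An inner mapping is determined by the set of positive imaginary units it negates;
      these sets are exactly the even subsets of the 2^n - 1 positive imaginary units,
      the maps \<open>R_x\<^sup>-\<^sup>1 L_x\<close> realising their complements of singletons.  Counting
      even subsets gives the order 2^(2^n - 2).
\<close>

section \<open>Basis index, sign and real part\<close>

fun cd_basis :: "cd \<Rightarrow> bool list" where
  "cd_basis (Sc r) = []"
| "cd_basis (Pr x a) = a # cd_basis x"

fun cd_negative :: "cd \<Rightarrow> bool" where
  "cd_negative (Sc r) = (r < 0)"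
| "cd_negative (Pr x a) = cd_negative x"

fun cd_real :: "cd \<Rightarrow> bool" where
  "cd_real (Sc r) = True"
| "cd_real (Pr x a) = (\<not> a \<and> cd_real x)"

fun xor_bits :: "bool list \<Rightarrow> bool list \<Rightarrow> bool list" where
  "xor_bits (a # u) (b # v) = (a \<noteq> b) # xor_bits u v"
| "xor_bits _ _ = []"

lemma xor_bits_comm: "xor_bits u v = xor_bits v u"
  by (induction u v rule: xor_bits.induct) (auto elim: xor_bits.elims)

lemma xor_bits_cancel:
  "length u = length a \<Longrightarrow> length a = length b \<Longrightarrow> xor_bits (xor_bits u a) (xor_bits u b) = xor_bits a b"
proof (induction u arbitrary: a b)
  case (Cons c u) then show ?case by (cases a; cases b) auto
qed simp

lemma xor_bits_cancelR:
  "length u = length a \<Longrightarrow> length a = length b \<Longrightarrow> xor_bits (xor_bits a u) (xor_bits b u) = xor_bits a b"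
  using xor_bits_cancel xor_bits_comm by metis

lemma xor_bits_zero: "length u = n \<Longrightarrow> xor_bits u (replicate n False) = u"
proof (induction u arbitrary: n)
  case (Cons a u) then show ?case by (cases n) auto
qed simp

lemma neg_neg [simp]: "cd_neg (cd_neg x) = x"
  by (induction x) auto

lemma basis_neg [simp]: "cd_basis (cd_neg x) = cd_basis x"
  by (induction x) auto

lemma real_neg [simp]: "cd_real (cd_neg x) = cd_real x"
  by (induction x) auto

lemma neg_Q: "x \<in> Q n \<Longrightarrow> cd_neg x \<in> Q n"
  by (induction n arbitrary: x) auto

lemma negative_neg: "x \<in> Q n \<Longrightarrow> cd_negative (cd_neg x) = (\<not> cd_negative x)"
  by (induction n arbitrary: x) auto

lemma neg_neq: "x \<in> Q n \<Longrightarrow> cd_neg x \<noteq> x"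
  by (induction n arbitrary: x) auto

lemma length_basis: "x \<in> Q n \<Longrightarrow> length (cd_basis x) = n"
  by (induction n arbitrary: x) auto

lemma same_basis:
  "x \<in> Q n \<Longrightarrow> y \<in> Q n \<Longrightarrow> cd_basis x = cd_basis y \<Longrightarrow> y = x \<or> y = cd_neg x"
proof (induction n arbitrary: x y)
  case (Suc n)
  then obtain x' a y' b where "x = Pr x' a" "y = Pr y' b" "x' \<in> Q n" "y' \<in> Q n" by auto
  with Suc show ?case by auto
qed auto

lemma finite_Q: "finite (Q n)"
proof (induction n)
  case (Suc n)
  have "Q (Suc n) = (\<lambda>(x, a). Pr x a) ` (Q n \<times> UNIV)" by auto
  then show ?case using Suc by simp
qed simp

lemma one_Q: "cd_one n \<in> Q n"
  by (induction n) auto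

lemma real_one: "cd_real (cd_one n)"
  by (induction n) auto

lemma negative_one: "\<not> cd_negative (cd_one n)"
  by (induction n) auto

lemma basis_one: "cd_basis (cd_one n) = replicate n False"
  by (induction n) auto

lemma real_iff_basis: "x \<in> Q n \<Longrightarrow> cd_real x \<longleftrightarrow> cd_basis x = cd_basis (cd_one n)"
  by (induction n arbitrary: x) auto

lemma real_cases: "x \<in> Q n \<Longrightarrow> cd_real x \<Longrightarrow> x = cd_one n \<or> x = cd_neg (cd_one n)"
  using same_basis[OF one_Q, of x n] real_iff_basis by auto

lemma conj_eq: "x \<in> Q n \<Longrightarrow> cd_conj x = (if cd_real x then x else cd_neg x)"
proof (induction n arbitrary: x)
  case (Suc n)
  then obtain y a where "x = Pr y a" "y \<in> Q n" by auto
  with Suc show ?case by (cases a) auto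
qed auto

lemma conj_Q: "x \<in> Q n \<Longrightarrow> cd_conj x \<in> Q n"
  using conj_eq neg_Q by auto

lemma basis_conj: "x \<in> Q n \<Longrightarrow> cd_basis (cd_conj x) = cd_basis x"
  using conj_eq by auto

lemma conj_neg: "x \<in> Q n \<Longrightarrow> cd_conj (cd_neg x) = cd_neg (cd_conj x)"
  using conj_eq[of x n] conj_eq[of "cd_neg x" n] neg_Q by auto

lemma conj_conj: "x \<in> Q n \<Longrightarrow> cd_conj (cd_conj x) = x"
  using conj_eq[of x n] conj_eq[of "cd_conj x" n] conj_Q[of x n] by auto

lemma mult_Q: "x \<in> Q n \<Longrightarrow> y \<in> Q n \<Longrightarrow> cd_mult x y \<in> Q n"
proof (induction n arbitrary: x y)
  case (Suc n)
  then obtain x' a y' b where "x = Pr x' a" "y = Pr y' b" "x' \<in> Q n" "y' \<in> Q n" by auto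
  with Suc show ?case by (cases a; cases b) (auto simp: conj_Q neg_Q)
qed auto

lemma mult_neg:
  "x \<in> Q n \<Longrightarrow> y \<in> Q n \<Longrightarrow>
   cd_mult (cd_neg x) y = cd_neg (cd_mult x y) \<and> cd_mult x (cd_neg y) = cd_neg (cd_mult x y)"
proof (induction n arbitrary: x y)
  case (Suc n)
  then obtain x' a y' b where "x = Pr x' a" "y = Pr y' b" "x' \<in> Q n" "y' \<in> Q n" by auto
  with Suc show ?case by (cases a; cases b) (auto simp: conj_Q neg_Q conj_neg)
qed auto

lemma mult_negL [simp]: "x \<in> Q n \<Longrightarrow> y \<in> Q n \<Longrightarrow> cd_mult (cd_neg x) y = cd_neg (cd_mult x y)"
  using mult_neg by blast

lemma mult_negR [simp]: "x \<in> Q n \<Longrightarrow> y \<in> Q n \<Longrightarrow> cd_mult x (cd_neg y) = cd_neg (cd_mult x y)"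
  using mult_neg by blast

lemma basis_mult:
  "x \<in> Q n \<Longrightarrow> y \<in> Q n \<Longrightarrow> cd_basis (cd_mult x y) = xor_bits (cd_basis x) (cd_basis y)"
proof (induction n arbitrary: x y)
  case (Suc n)
  then obtain x' a y' b where "x = Pr x' a" "y = Pr y' b" "x' \<in> Q n" "y' \<in> Q n" by auto
  with Suc show ?case by (cases a; cases b) (auto simp: conj_Q neg_Q basis_conj xor_bits_comm)
qed auto

lemma real_mult: "x \<in> Q n \<Longrightarrow> y \<in> Q n \<Longrightarrow> cd_real (cd_mult x y) = (cd_basis x = cd_basis y)"
proof (induction n arbitrary: x y)
  case (Suc n)
  then obtain x' a y' b where "x = Pr x' a" "y = Pr y' b" "x' \<in> Q n" "y' \<in> Q n" by auto
  with Suc show ?case by (cases a; cases b) (auto simp: conj_Q basis_conj)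
qed auto

lemma one_mult: "y \<in> Q n \<Longrightarrow> cd_mult (cd_one n) y = y \<and> cd_mult y (cd_one n) = y"
proof (induction n arbitrary: y)
  case (Suc n)
  then obtain y' b where "y = Pr y' b" "y' \<in> Q n" by auto
  with Suc show ?case by (cases b) (auto simp: real_one conj_eq[OF one_Q])
qed auto

lemma mult_oneL [simp]: "y \<in> Q n \<Longrightarrow> cd_mult (cd_one n) y = y"
  using one_mult by blast

lemma mult_oneR [simp]: "y \<in> Q n \<Longrightarrow> cd_mult y (cd_one n) = y"
  using one_mult by blast

lemma real_multL:
  "x \<in> Q n \<Longrightarrow> y \<in> Q n \<Longrightarrow> cd_real x \<Longrightarrow> cd_mult x y = (if cd_negative x then cd_neg y else y)"
  using real_cases[of x n] one_Q[of n] negative_one[of n] negative_neg[OF one_Q, of n] by auto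

lemma real_multR:
  "x \<in> Q n \<Longrightarrow> y \<in> Q n \<Longrightarrow> cd_real x \<Longrightarrow> cd_mult y x = (if cd_negative x then cd_neg y else y)"
  using real_cases[of x n] one_Q[of n] negative_one[of n] negative_neg[OF one_Q, of n] by auto

lemma mult_commute:
  "x \<in> Q n \<Longrightarrow> y \<in> Q n \<Longrightarrow>
   cd_mult y x = (if cd_real x \<or> cd_real y \<or> cd_basis x = cd_basis y
                  then cd_mult x y else cd_neg (cd_mult x y))"
proof (induction n arbitrary: x y)
  case (Suc n)
  then obtain x' a y' b where xy: "x = Pr x' a" "y = Pr y' b" "x' \<in> Q n" "y' \<in> Q n" by auto
  show ?case
  proof (cases a; cases b)
    assume "\<not> a" "\<not> b" then show ?thesis using xy Suc.IH[of x' y'] by auto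
  next
    assume "\<not> a" "b" then show ?thesis using xy conj_eq[of x' n] by (auto simp: conj_Q)
  next
    assume "a" "\<not> b" then show ?thesis using xy conj_eq[of y' n] by (auto simp: conj_Q)
  next
    assume ab: "a" "b"
    have IH: "cd_mult y' x' = (if cd_real x' \<or> cd_real y' \<or> cd_basis x' = cd_basis y'
                               then cd_mult x' y' else cd_neg (cd_mult x' y'))"
      using Suc.IH xy by blast
    have m: "cd_mult x' y' \<in> Q n" "cd_mult y' x' \<in> Q n" using xy mult_Q by auto
    show ?thesis
      using xy ab conj_eq[of y' n] conj_eq[of x' n] IH m
        real_multL[of x' n y'] real_multL[of y' n x'] real_multR[of x' n y'] real_multR[of y' n x']
        real_iff_basis[of x' n] real_iff_basis[of y' n]
        neg_neq[of "cd_mult x' y'" n] neg_neq[of "cd_mult y' x'" n]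
      by (auto simp: conj_Q neg_Q)
  qed
qed auto

lemma conj_mult:
  "x \<in> Q n \<Longrightarrow> y \<in> Q n \<Longrightarrow> cd_conj (cd_mult x y) = cd_mult (cd_conj y) (cd_conj x)"
  using conj_eq[of x n] conj_eq[of y n] conj_eq[of "cd_mult x y" n] mult_Q[of x n y]
    real_mult[of x n y] mult_commute[of x n y] real_iff_basis[of x n] real_iff_basis[of y n]
  by (auto simp: neg_Q)

lemma alternative:
  "x \<in> Q n \<Longrightarrow> y \<in> Q n \<Longrightarrow>
   cd_mult x (cd_mult x y) = (if cd_real x then y else cd_neg y) \<and>
   cd_mult (cd_mult y x) x = (if cd_real x then y else cd_neg y)"
proof (induction n arbitrary: x y)
  case (Suc n)
  then obtain x' a y' b where xy: "x = Pr x' a" "y = Pr y' b" "x' \<in> Q n" "y' \<in> Q n" by auto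
  have IH: "cd_mult x' (cd_mult x' y') = (if cd_real x' then y' else cd_neg y')"
           "cd_mult (cd_mult y' x') x' = (if cd_real x' then y' else cd_neg y')"
    using Suc.IH xy by blast+
  have Q: "cd_mult x' y' \<in> Q n" "cd_mult y' x' \<in> Q n" "cd_neg x' \<in> Q n" "cd_neg y' \<in> Q n"
    "cd_conj x' \<in> Q n" "cd_conj y' \<in> Q n"
    using xy mult_Q neg_Q conj_Q by auto
  show ?case
  proof (cases a; cases b)
    assume "\<not> a" "\<not> b" then show ?thesis using xy IH by auto
  next
    assume "\<not> a" "b" then show ?thesis
      using xy IH conj_eq[of x' n] Q mult_negL[of "cd_mult y' x'" n "cd_neg x'"]
        mult_negR[of "cd_mult y' x'" n x']
      by auto
  next
    assume "a" "\<not> b" then show ?thesis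
      using xy IH conj_eq[of x' n] conj_mult[of x' n "cd_conj y'"] conj_conj[of y' n] Q
        mult_negR[of y' n x'] mult_negL[of "cd_mult y' x'" n x']
      by auto
  next
    assume ab: "a" "b"
    have cancel: "cd_mult x' (cd_mult (cd_conj x') y') = y'"
      using conj_eq[of x' n] xy IH mult_negL[of x' n y'] mult_negR[of x' n "cd_mult x' y'"] Q
      by (cases "cd_real x'") simp_all
    have "cd_conj (cd_neg (cd_mult (cd_conj y') x')) = cd_neg (cd_mult (cd_conj x') y')"
      using conj_neg[of "cd_mult (cd_conj y') x'" n] conj_mult[of "cd_conj y'" n x']
        conj_conj[of y' n] Q mult_Q[of "cd_conj y'" n x'] xy
      by auto
    then have "cd_mult x (cd_mult x y) = Pr (cd_neg y') True"
      using xy ab Q cancel mult_negR[of x' n "cd_mult (cd_conj x') y'"] mult_Q[of "cd_conj x'" n y']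
      by simp
    moreover have "cd_mult (cd_mult y x) x = Pr (cd_neg y') True"
      using xy ab Q cancel mult_negR[of x' n "cd_mult (cd_conj x') y'"] mult_Q[of "cd_conj x'" n y']
      by simp
    ultimately show ?thesis using xy ab by auto
  qed
qed auto

section \<open>Translations and admissible bijections\<close>

text \<open>By the alternative laws, \<open>L_x\<close> and \<open>R_x\<close> are their own inverses up to sign.\<close>
lemma L_Bij: "x \<in> Q n \<Longrightarrow> Lmap n x \<in> Bij (Q n)"
proof -
  assume x: "x \<in> Q n"
  let ?g = "\<lambda>z. if cd_real x then cd_mult x z else cd_neg (cd_mult x z)"
  have "bij_betw (\<lambda>a\<in>Q n. cd_mult x a) (Q n) (Q n)"
    by (rule bij_betw_byWitness[where f' = ?g]) (use x alternative[of x n] in \<open>auto simp: mult_Q neg_Q\<close>)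
  then show ?thesis unfolding Bij_def Lmap_def by simp
qed

lemma R_Bij: "x \<in> Q n \<Longrightarrow> Rmap n x \<in> Bij (Q n)"
proof -
  assume x: "x \<in> Q n"
  let ?g = "\<lambda>z. if cd_real x then cd_mult z x else cd_neg (cd_mult z x)"
  have "bij_betw (\<lambda>a\<in>Q n. cd_mult a x) (Q n) (Q n)"
  proof (rule bij_betw_byWitness[where f' = ?g])
    show "\<forall>a\<in>Q n. ?g ((\<lambda>a\<in>Q n. cd_mult a x) a) = a" "\<forall>a\<in>Q n. (\<lambda>a\<in>Q n. cd_mult a x) (?g a) = a"
      using x alternative[of x n] mult_negL[OF mult_Q[OF _ x] x] by (auto simp: mult_Q neg_Q)
  qed (use x in \<open>auto simp: mult_Q neg_Q\<close>)
  then show ?thesis unfolding Bij_def Rmap_def by simp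
qed

lemma Mlt_induct [consumes 1, case_names identity left right inverse compose]:
  assumes f: "f \<in> Mlt n"
    and identity: "P (\<lambda>x\<in>Q n. x)"
    and left: "\<And>x. x \<in> Q n \<Longrightarrow> P (Lmap n x)"
    and right: "\<And>x. x \<in> Q n \<Longrightarrow> P (Rmap n x)"
    and inverse: "\<And>g. g \<in> Bij (Q n) \<Longrightarrow> P g \<Longrightarrow> P (\<lambda>x\<in>Q n. inv_into (Q n) g x)"
    and compose: "\<And>g h. g \<in> Bij (Q n) \<Longrightarrow> h \<in> Bij (Q n) \<Longrightarrow> P g \<Longrightarrow> P h \<Longrightarrow> P (compose (Q n) g h)"
  shows "P f"
proof -
  have "P f \<and> f \<in> Bij (Q n)" using f unfolding Mlt_def
  proof (induction rule: generate.induct)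
    case one
    have "\<one>\<^bsub>BijGroup (Q n)\<^esub> = (\<lambda>x\<in>Q n. x)" by (simp add: BijGroup_def)
    then show ?case using identity id_Bij by metis
  next
    case (incl h) then show ?case using left right L_Bij R_Bij by auto
  next
    case (inv h)
    then have "P h" "h \<in> Bij (Q n)" using left right L_Bij R_Bij by auto
    then show ?case using inverse inv_BijGroup restrict_inv_into_Bij by metis
  next
    case (eng g h) then show ?case using compose compose_Bij[of g "Q n" h] by (simp add: BijGroup_def)
  qed
  then show ?thesis ..
qed

lemma Bij_in: "f \<in> Bij S \<Longrightarrow> x \<in> S \<Longrightarrow> f x \<in> S"
  using Bij_imp_funcset by blast

lemma Bij_injD: "f \<in> Bij S \<Longrightarrow> x \<in> S \<Longrightarrow> y \<in> S \<Longrightarrow> f x = f y \<Longrightarrow> x = y"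
  unfolding Bij_def bij_betw_def inj_on_def by blast

lemma Bij_inv_into: "f \<in> Bij S \<Longrightarrow> x \<in> S \<Longrightarrow> inv_into S f x \<in> S \<and> f (inv_into S f x) = x"
  unfolding Bij_def bij_betw_def by (auto simp: inv_into_into f_inv_into_f)

text \<open>Admissible bijections of Q_n commute with negation and act on basis indices by a
  translation (they preserve XOR-differences of indices).\<close>
definition admissible :: "nat \<Rightarrow> (cd \<Rightarrow> cd) \<Rightarrow> bool" where
  "admissible n f \<longleftrightarrow> f \<in> Bij (Q n) \<and> (\<forall>x\<in>Q n. f (cd_neg x) = cd_neg (f x)) \<and>
     (\<forall>x\<in>Q n. \<forall>y\<in>Q n. xor_bits (cd_basis (f x)) (cd_basis (f y)) = xor_bits (cd_basis x) (cd_basis y))"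

lemma admissible_inverse:
  assumes "admissible n f"
  shows "admissible n (\<lambda>x\<in>Q n. inv_into (Q n) f x)"
proof -
  have B: "f \<in> Bij (Q n)" and N: "\<And>x. x \<in> Q n \<Longrightarrow> f (cd_neg x) = cd_neg (f x)"
    and X: "\<And>x y. x \<in> Q n \<Longrightarrow> y \<in> Q n \<Longrightarrow>
              xor_bits (cd_basis (f x)) (cd_basis (f y)) = xor_bits (cd_basis x) (cd_basis y)"
    using assms unfolding admissible_def by auto
  let ?g = "\<lambda>x\<in>Q n. inv_into (Q n) f x"
  have g: "\<And>x. x \<in> Q n \<Longrightarrow> ?g x \<in> Q n \<and> f (?g x) = x" using Bij_inv_into[OF B] by simp
  have "?g (cd_neg x) = cd_neg (?g x)" if x: "x \<in> Q n" for x
  proof (rule Bij_injD[OF B])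
    show "f (?g (cd_neg x)) = f (cd_neg (?g x))" using N g x neg_Q by metis
  qed (use g x neg_Q in blast)+
  moreover have "xor_bits (cd_basis (?g x)) (cd_basis (?g y)) = xor_bits (cd_basis x) (cd_basis y)"
    if "x \<in> Q n" "y \<in> Q n" for x y
    using X[of "?g x" "?g y"] g that by simp
  ultimately show ?thesis using restrict_inv_into_Bij[OF B] unfolding admissible_def by blast
qed

lemma admissible_identity: "admissible n (\<lambda>x\<in>Q n. x)"
  unfolding admissible_def by (simp add: id_Bij neg_Q)

lemma admissible_L: "x \<in> Q n \<Longrightarrow> admissible n (Lmap n x)"
  using L_Bij[of x n] unfolding admissible_def
  by (auto simp: Lmap_def neg_Q basis_mult xor_bits_cancel length_basis)

lemma admissible_R: "x \<in> Q n \<Longrightarrow> admissible n (Rmap n x)"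
  using R_Bij[of x n] unfolding admissible_def
  by (auto simp: Rmap_def neg_Q basis_mult xor_bits_cancelR length_basis)

lemma admissible_compose:
  "admissible n g \<Longrightarrow> admissible n h \<Longrightarrow> admissible n (compose (Q n) g h)"
  using compose_Bij[of g "Q n" h] unfolding admissible_def
  by (simp add: compose_def neg_Q Bij_in)

lemma Mlt_admissible: "f \<in> Mlt n \<Longrightarrow> admissible n f"
proof (induction rule: Mlt_induct)
  case identity then show ?case by (rule admissible_identity)
next
  case (left x) then show ?case by (rule admissible_L)
next
  case (right x) then show ?case by (rule admissible_R)
next
  case (inverse g) then show ?case using admissible_inverse by blast
next
  case (compose g h) then show ?case using admissible_compose by blast
qed

section \<open>Inner mappings act by signs\<close>

lemma Inn_admissible: "f \<in> Inn n \<Longrightarrow> admissible n f"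
  unfolding Inn_def using Mlt_admissible by auto

lemma Inn_one: "f \<in> Inn n \<Longrightarrow> f (cd_one n) = cd_one n"
  unfolding Inn_def by auto

lemma Inn_Bij: "f \<in> Inn n \<Longrightarrow> f \<in> Bij (Q n)"
  using Inn_admissible unfolding admissible_def by blast

lemma Inn_neg: "f \<in> Inn n \<Longrightarrow> x \<in> Q n \<Longrightarrow> f (cd_neg x) = cd_neg (f x)"
  using Inn_admissible unfolding admissible_def by blast

text \<open>An admissible map fixing 1 fixes all basis indices, so it maps \<open>x\<close> to \<open>\<plusminus>x\<close>.\<close>
lemma Inn_sign: "f \<in> Inn n \<Longrightarrow> x \<in> Q n \<Longrightarrow> f x = x \<or> f x = cd_neg x"
proof -
  assume f: "f \<in> Inn n" and x: "x \<in> Q n"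
  have fx: "f x \<in> Q n" using Bij_in[OF Inn_Bij[OF f] x] .
  have "xor_bits (cd_basis (f x)) (cd_basis (f (cd_one n))) = xor_bits (cd_basis x) (cd_basis (cd_one n))"
    using Inn_admissible[OF f] x one_Q unfolding admissible_def by blast
  then have "cd_basis (f x) = cd_basis x"
    unfolding Inn_one[OF f] basis_one
    using xor_bits_zero[OF length_basis[OF x]] xor_bits_zero[OF length_basis[OF fx]] by simp
  then show ?thesis using same_basis[OF x fx] by simp
qed

lemma Inn_ext: "f \<in> Inn n \<Longrightarrow> g \<in> Inn n \<Longrightarrow> (\<And>x. x \<in> Q n \<Longrightarrow> f x = g x) \<Longrightarrow> f = g"
  using Inn_Bij Bij_imp_extensional extensionalityI by metis

lemma Inn_subgroup: "subgroup (Inn n) (BijGroup (Q n))"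
proof -
  interpret M: subgroup "Mlt n" "BijGroup (Q n)"
    unfolding Mlt_def
    by (rule group.generate_is_subgroup[OF group_BijGroup]) (auto simp: BijGroup_def L_Bij R_Bij)
  show ?thesis
  proof
    show "Inn n \<subseteq> carrier (BijGroup (Q n))" unfolding Inn_def using M.subset by blast
  next
    fix f g assume f: "f \<in> Inn n" and g: "g \<in> Inn n"
    have "(f \<otimes>\<^bsub>BijGroup (Q n)\<^esub> g) (cd_one n) = cd_one n"
      using Inn_Bij[OF f] Inn_Bij[OF g] Inn_one[OF f] Inn_one[OF g] one_Q
      by (simp add: BijGroup_def compose_def)
    then show "f \<otimes>\<^bsub>BijGroup (Q n)\<^esub> g \<in> Inn n"
      using M.m_closed f g unfolding Inn_def by blast
  next
    show "\<one>\<^bsub>BijGroup (Q n)\<^esub> \<in> Inn n"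
      using M.one_closed one_Q unfolding Inn_def by (simp add: BijGroup_def)
  next
    fix f assume f: "f \<in> Inn n"
    have inj: "inj_on f (Q n)" using Inn_Bij[OF f] unfolding Bij_def bij_betw_def by blast
    have "inv_into (Q n) f (cd_one n) = cd_one n"
      using inv_into_f_f[OF inj one_Q] Inn_one[OF f] by simp
    then have "(inv\<^bsub>BijGroup (Q n)\<^esub> f) (cd_one n) = cd_one n"
      using inv_BijGroup[OF Inn_Bij[OF f]] one_Q by simp
    then show "inv\<^bsub>BijGroup (Q n)\<^esub> f \<in> Inn n"
      using f M.m_inv_closed unfolding Inn_def by blast
  qed
qed

lemma InnGroup_mult: "f \<in> Inn n \<Longrightarrow> g \<in> Inn n \<Longrightarrow> f \<otimes>\<^bsub>InnGroup n\<^esub> g = compose (Q n) f g"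
  unfolding InnGroup_def using Inn_Bij by (simp add: BijGroup_def)

lemma InnGroup_comm_group: "comm_group (InnGroup n)"
proof (rule group.group_comm_groupI)
  show "group (InnGroup n)" unfolding InnGroup_def
    by (rule subgroup.subgroup_is_group[OF Inn_subgroup group_BijGroup])
  fix f g assume "f \<in> carrier (InnGroup n)" "g \<in> carrier (InnGroup n)"
  then have f: "f \<in> Inn n" and g: "g \<in> Inn n" unfolding InnGroup_def by auto
  have "f (g x) = g (f x)" if x: "x \<in> Q n" for x
    using Inn_sign[OF f x] Inn_sign[OF g x] Inn_neg[OF f x] Inn_neg[OF g x] by auto
  then show "f \<otimes>\<^bsub>InnGroup n\<^esub> g = g \<otimes>\<^bsub>InnGroup n\<^esub> f"
    unfolding InnGroup_mult[OF f g] InnGroup_mult[OF g f] compose_def by auto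
qed

lemma InnGroup_square: "f \<in> carrier (InnGroup n) \<Longrightarrow> f \<otimes>\<^bsub>InnGroup n\<^esub> f = \<one>\<^bsub>InnGroup n\<^esub>"
proof -
  assume "f \<in> carrier (InnGroup n)"
  then have f: "f \<in> Inn n" unfolding InnGroup_def by auto
  have "f (f x) = x" if x: "x \<in> Q n" for x
    using Inn_sign[OF f x] Inn_neg[OF f x] by auto
  then show ?thesis unfolding InnGroup_mult[OF f f] compose_def
    by (auto simp: InnGroup_def BijGroup_def)
qed

section \<open>Parity of sign changes\<close>

definition Pos :: "nat \<Rightarrow> cd set" where
  "Pos n = {x \<in> Q n. \<not> cd_negative x}"

definition cd_abs :: "cd \<Rightarrow> cd" where
  "cd_abs z = (if cd_negative z then cd_neg z else z)"

definition sign_changes :: "nat \<Rightarrow> (cd \<Rightarrow> cd) \<Rightarrow> nat" where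
  "sign_changes n f = card {x \<in> Pos n. cd_negative (f x)}"

lemma Pos_Q: "x \<in> Pos n \<Longrightarrow> x \<in> Q n"
  unfolding Pos_def by auto

lemma finite_Pos: "finite (Pos n)"
  unfolding Pos_def using finite_Q by simp

lemma card_Pos: "card (Pos n) = 2 ^ n"
proof (induction n)
  case 0
  have "Pos 0 = {Sc 1}" unfolding Pos_def by auto
  then show ?case by simp
next
  case (Suc n)
  have "Pos (Suc n) = (\<lambda>(x, a). Pr x a) ` (Pos n \<times> UNIV)" unfolding Pos_def by auto
  moreover have "inj_on (\<lambda>(x, a). Pr x a) (Pos n \<times> (UNIV :: bool set))"
    by (auto simp: inj_on_def)
  ultimately have "card (Pos (Suc n)) = card (Pos n \<times> (UNIV :: bool set))"
    by (simp add: card_image)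
  then show ?case using Suc by (simp add: card_cartesian_product)
qed

lemma abs_Pos: "z \<in> Q n \<Longrightarrow> cd_abs z \<in> Pos n"
  unfolding cd_abs_def Pos_def using neg_Q negative_neg by auto

lemma card_symdiff_parity:
  assumes "finite B" "finite C"
  shows "even (card ((B - C) \<union> (C - B))) \<longleftrightarrow> (even (card B) \<longleftrightarrow> even (card C))"
proof -
  have "card ((B - C) \<union> (C - B)) = card (B - C) + card (C - B)"
    using assms by (intro card_Un_disjoint) auto
  moreover have "card B = card (B - C) + card (B \<inter> C)"
    using card_Int_Diff[OF assms(1), of C] by simp
  moreover have "card C = card (C - B) + card (B \<inter> C)"
    using card_Int_Diff[OF assms(2), of B] by (simp add: Int_commute)
  ultimately show ?thesis by auto
qed

lemma bij_card_filter: "bij_betw h A A \<Longrightarrow> card {x \<in> A. R (h x)} = card {y \<in> A. R y}"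
proof -
  assume h: "bij_betw h A A"
  then have "h ` {x \<in> A. R (h x)} = {y \<in> A. R y}" unfolding bij_betw_def by auto
  moreover have "inj_on h {x \<in> A. R (h x)}"
    using h unfolding bij_betw_def by (auto intro: inj_on_subset)
  ultimately show ?thesis by (metis card_image)
qed

lemma admissible_abs_bij:
  assumes "admissible n g"
  shows "bij_betw (\<lambda>x. cd_abs (g x)) (Pos n) (Pos n)"
proof -
  have B: "g \<in> Bij (Q n)" and N: "\<And>x. x \<in> Q n \<Longrightarrow> g (cd_neg x) = cd_neg (g x)"
    using assms unfolding admissible_def by auto
  have sub: "(\<lambda>x. cd_abs (g x)) ` Pos n \<subseteq> Pos n"
    using abs_Pos Bij_in[OF B] Pos_Q by blast
  have "inj_on (\<lambda>x. cd_abs (g x)) (Pos n)"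
  proof (rule inj_onI)
    fix x y assume x: "x \<in> Pos n" and y: "y \<in> Pos n" and e: "cd_abs (g x) = cd_abs (g y)"
    have gQ: "g x \<in> Q n" "g y \<in> Q n" using x y Bij_in[OF B] Pos_Q by blast+
    have xy: "x \<in> Q n" "y \<in> Q n" "\<not> cd_negative x" "\<not> cd_negative y"
      using x y unfolding Pos_def by auto
    from e gQ have "g x = g y \<or> g x = cd_neg (g y)" unfolding cd_abs_def
      by (auto split: if_splits simp: negative_neg) (metis neg_neg)+
    then show "x = y"
    proof
      assume "g x = g y" then show ?thesis using Bij_injD[OF B] xy by blast
    next
      assume "g x = cd_neg (g y)"
      then have "x = cd_neg y" using Bij_injD[OF B] N xy neg_Q by metis
      then show ?thesis using xy negative_neg by auto
    qed
  qed
  then show ?thesis unfolding bij_betw_def using endo_inj_surj[OF finite_Pos sub] by blast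
qed

lemma sign_changes_compose:
  assumes f: "admissible n f" and g: "admissible n g"
  shows "even (sign_changes n (compose (Q n) f g)) \<longleftrightarrow>
         (even (sign_changes n f) \<longleftrightarrow> even (sign_changes n g))"
proof -
  have Bf: "f \<in> Bij (Q n)" and Bg: "g \<in> Bij (Q n)"
    and Nf: "\<And>x. x \<in> Q n \<Longrightarrow> f (cd_neg x) = cd_neg (f x)"
    using f g unfolding admissible_def by auto
  let ?B = "{x \<in> Pos n. cd_negative (g x)}" and ?C = "{x \<in> Pos n. cd_negative (f (cd_abs (g x)))}"
  have "cd_negative (compose (Q n) f g x) = (cd_negative (g x) \<noteq> cd_negative (f (cd_abs (g x))))"
    if x: "x \<in> Pos n" for x
  proof -
    have gx: "g x \<in> Q n" using Bij_in[OF Bg] Pos_Q x by blast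
    have fr: "f (cd_abs (g x)) \<in> Q n" using Bij_in[OF Bf] abs_Pos[OF gx] Pos_Q by blast
    have "compose (Q n) f g x = f (g x)" using x Pos_Q by (simp add: compose_def)
    moreover have "f (g x) = (if cd_negative (g x) then cd_neg (f (cd_abs (g x))) else f (cd_abs (g x)))"
      using Nf[of "cd_abs (g x)"] abs_Pos[OF gx] Pos_Q unfolding cd_abs_def by auto
    ultimately show ?thesis using negative_neg[OF fr] by simp
  qed
  then have "{x \<in> Pos n. cd_negative (compose (Q n) f g x)} = (?B - ?C) \<union> (?C - ?B)" by auto
  moreover have "card ?C = sign_changes n f"
    unfolding sign_changes_def
    by (rule bij_card_filter[OF admissible_abs_bij[OF g], of "\<lambda>y. cd_negative (f y)"])
  ultimately show ?thesis
    using card_symdiff_parity[of ?B ?C] finite_Pos unfolding sign_changes_def by auto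
qed

lemma card_involution_swap:
  assumes "finite S" "A \<subseteq> S" "\<forall>y\<in>A. \<phi> y \<in> S - A" "\<forall>y\<in>S - A. \<phi> y \<in> A" "\<forall>y\<in>S. \<phi> (\<phi> y) = y"
  shows "card S = 2 * card A"
proof -
  have "bij_betw \<phi> A (S - A)"
    by (rule bij_betw_byWitness[where f' = \<phi>]) (use assms in auto)
  then have "card A = card (S - A)" by (rule bij_betw_same_card)
  moreover have "card S = card A + card (S - A)"
    using assms(1,2) by (metis card_Diff_subset finite_subset le_add_diff_inverse card_mono)
  ultimately show ?thesis by simp
qed

text \<open>A map squaring to \<open>-id\<close> and commuting with negation changes the sign of exactly half
  of the positive elements: \<open>y \<mapsto> |h y|\<close> swaps the positive elements it negates with those
  it does not.\<close>
lemma negative_half: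
  assumes H: "\<forall>y\<in>Q n. h y \<in> Q n \<and> h (h y) = cd_neg y \<and> h (cd_neg y) = cd_neg (h y)"
  shows "2 * card {y \<in> Pos n. cd_negative (h y)} = 2 ^ n"
proof -
  let ?A = "{y \<in> Pos n. cd_negative (h y)}" and ?phi = "\<lambda>y. cd_abs (h y)"
  have swap: "?phi y \<in> Pos n \<and> (y \<in> ?A \<longleftrightarrow> ?phi y \<notin> ?A) \<and> ?phi (?phi y) = y" if y: "y \<in> Pos n" for y
  proof -
    have yQ: "y \<in> Q n" "\<not> cd_negative y" using y unfolding Pos_def by auto
    have hy: "h y \<in> Q n" "h (h y) = cd_neg y" "h (cd_neg (h y)) = cd_neg (h (h y))" using H yQ by auto
    show ?thesis
    proof (cases "cd_negative (h y)")
      case True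
      then have "?phi y = cd_neg (h y)" "h (?phi y) = y" using hy unfolding cd_abs_def by simp_all
      then show ?thesis using True y yQ abs_Pos[OF hy(1)] unfolding cd_abs_def by auto
    next
      case False
      then have "?phi y = h y" "h (?phi y) = cd_neg y" using hy unfolding cd_abs_def by simp_all
      then show ?thesis using False y yQ abs_Pos[OF hy(1)] negative_neg[OF yQ(1)]
        unfolding cd_abs_def by (auto simp: neg_Q)
    qed
  qed
  have "card (Pos n) = 2 * card ?A"
    by (rule card_involution_swap[where \<phi> = ?phi]) (use finite_Pos swap in auto)
  then show ?thesis using card_Pos by simp
qed

lemma translation_sign_changes_even:
  assumes n: "2 \<le> n"
    and m: "\<forall>y\<in>Q n. m y \<in> Q n \<and> m (cd_neg y) = cd_neg (m y) \<and>
                     m (m y) = (if cd_real x then y else cd_neg y) \<and>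
                     (cd_real x \<longrightarrow> m y = (if cd_negative x then cd_neg y else y))"
  shows "even (card {y \<in> Pos n. cd_negative (m y)})"
proof (cases "cd_real x")
  case True
  then have "{y \<in> Pos n. cd_negative (m y)} = (if cd_negative x then Pos n else {})"
    using m negative_neg unfolding Pos_def by auto
  then show ?thesis using card_Pos n by simp
next
  case False
  then have "2 * card {y \<in> Pos n. cd_negative (m y)} = 2 ^ n"
    using m by (intro negative_half) auto
  moreover have "(2::nat) ^ n = 2 ^ (n - 2) * 2 ^ 2"
    using n by (metis le_add_diff_inverse2 power_add)
  ultimately show ?thesis by simp
qed

lemma sign_changes_L: "2 \<le> n \<Longrightarrow> x \<in> Q n \<Longrightarrow> even (sign_changes n (Lmap n x))"
proof -
  assume n: "2 \<le> n" and x: "x \<in> Q n"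
  have "sign_changes n (Lmap n x) = card {y \<in> Pos n. cd_negative (cd_mult x y)}"
    unfolding sign_changes_def Lmap_def by (metis (lifting) Pos_Q restrict_apply')
  moreover have "even (card {y \<in> Pos n. cd_negative (cd_mult x y)})"
    by (rule translation_sign_changes_even[where x = x, OF n]) (use x alternative[OF x] real_multL[OF x] in \<open>auto simp: mult_Q\<close>)
  ultimately show ?thesis by simp
qed

lemma sign_changes_R: "2 \<le> n \<Longrightarrow> x \<in> Q n \<Longrightarrow> even (sign_changes n (Rmap n x))"
proof -
  assume n: "2 \<le> n" and x: "x \<in> Q n"
  have "sign_changes n (Rmap n x) = card {y \<in> Pos n. cd_negative (cd_mult y x)}"
    unfolding sign_changes_def Rmap_def by (metis (lifting) Pos_Q restrict_apply')
  moreover have "even (card {y \<in> Pos n. cd_negative (cd_mult y x)})"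
    by (rule translation_sign_changes_even[where x = x, OF n]) (use x alternative[OF x] real_multR[OF x] in \<open>auto simp: mult_Q\<close>)
  ultimately show ?thesis by simp
qed

lemma Mlt_sign_changes_even: "2 \<le> n \<Longrightarrow> f \<in> Mlt n \<Longrightarrow> even (sign_changes n f)"
proof -
  assume n: "2 \<le> n" and f: "f \<in> Mlt n"
  have id: "sign_changes n (\<lambda>x\<in>Q n. x) = 0"
    unfolding sign_changes_def Pos_def by simp
  from f have "admissible n f \<and> even (sign_changes n f)"
  proof (induction rule: Mlt_induct)
    case identity then show ?case by (simp only: id admissible_identity even_zero simp_thms)
  next
    case (left x) then show ?case using sign_changes_L[OF n] admissible_L by blast
  next
    case (right x) then show ?case using sign_changes_R[OF n] admissible_R by blast
  next
    case (inverse g)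
    let ?g' = "\<lambda>x\<in>Q n. inv_into (Q n) g x"
    have adm: "admissible n ?g'" using admissible_inverse inverse by blast
    have "compose (Q n) ?g' g = (\<lambda>x\<in>Q n. x)" using Bij_compose_restrict_eq[OF inverse(1)] .
    then have "even (sign_changes n ?g')"
      using sign_changes_compose[OF adm, of g] inverse id by (metis even_zero)
    then show ?case using adm by blast
  next
    case (compose g h)
    then have adm: "admissible n g" "admissible n h" by auto
    then have "even (sign_changes n (compose (Q n) g h))"
      using sign_changes_compose[OF adm] compose by blast
    then show ?case using admissible_compose[OF adm] by blast
  qed
  then show ?thesis ..
qed

section \<open>The associative commutative case\<close>

text \<open>If Q_n is an abelian group, Mlt(Q_n) consists of left translations, each determined
  by the image of 1; hence Inn(Q_n) is trivial.  This applies to Q_1, the cyclic group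
  of order 4.\<close>
lemma Mlt_left_translation:
  assumes assoc: "\<And>x y z. x \<in> Q n \<Longrightarrow> y \<in> Q n \<Longrightarrow> z \<in> Q n \<Longrightarrow>
                    cd_mult x (cd_mult y z) = cd_mult (cd_mult x y) z"
    and comm: "\<And>x y. x \<in> Q n \<Longrightarrow> y \<in> Q n \<Longrightarrow> cd_mult x y = cd_mult y x"
    and f: "f \<in> Mlt n"
  shows "\<forall>x\<in>Q n. f x = cd_mult (f (cd_one n)) x"
  using f
proof (induction rule: Mlt_induct)
  case identity then show ?case using one_Q by simp
next
  case (left x) then show ?case using one_Q by (simp add: Lmap_def)
next
  case (right x) then show ?case using one_Q comm by (simp add: Rmap_def)
next
  case (inverse g)
  let ?d = "inv_into (Q n) g (cd_one n)"
  have g: "\<And>y. y \<in> Q n \<Longrightarrow> g y = cd_mult (g (cd_one n)) y" using inverse(2) by blast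
  have d: "?d \<in> Q n" "g ?d = cd_one n" using Bij_inv_into[OF inverse(1) one_Q] by auto
  have g1: "g (cd_one n) \<in> Q n" using Bij_in[OF inverse(1) one_Q] .
  have inv_eq: "inv_into (Q n) g x = cd_mult ?d x" if x: "x \<in> Q n" for x
  proof -
    have "g (cd_mult ?d x) = cd_mult (g (cd_one n)) (cd_mult ?d x)" using g mult_Q[OF d(1) x] .
    also have "\<dots> = cd_mult (cd_mult (g (cd_one n)) ?d) x" by (rule assoc[OF g1 d(1) x])
    also have "cd_mult (g (cd_one n)) ?d = cd_one n" using g[OF d(1)] d(2) by metis
    finally have "g (cd_mult ?d x) = x" using x by simp
    then show ?thesis
      using inv_into_f_f[of g "Q n" "cd_mult ?d x"] inverse(1) mult_Q[OF d(1) x]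
      unfolding Bij_def bij_betw_def by simp
  qed
  show ?case
  proof
    fix x assume x: "x \<in> Q n"
    have "(\<lambda>y\<in>Q n. inv_into (Q n) g y) (cd_one n) = ?d" using one_Q by simp
    then show "(\<lambda>y\<in>Q n. inv_into (Q n) g y) x = cd_mult ((\<lambda>y\<in>Q n. inv_into (Q n) g y) (cd_one n)) x"
      using inv_eq[OF x] x by simp
  qed
next
  case (compose g h)
  have g: "\<And>y. y \<in> Q n \<Longrightarrow> g y = cd_mult (g (cd_one n)) y" using compose(3) by blast
  have h: "\<And>y. y \<in> Q n \<Longrightarrow> h y = cd_mult (h (cd_one n)) y" using compose(4) by blast
  have g1: "g (cd_one n) \<in> Q n" and h1: "h (cd_one n) \<in> Q n"
    using Bij_in[OF compose(1) one_Q] Bij_in[OF compose(2) one_Q] .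
  show ?case
  proof
    fix x assume x: "x \<in> Q n"
    have "g (h x) = cd_mult (g (cd_one n)) (cd_mult (h (cd_one n)) x)"
      using g[OF Bij_in[OF compose(2) x]] h[OF x] by simp
    also have "\<dots> = cd_mult (cd_mult (g (cd_one n)) (h (cd_one n))) x" by (rule assoc[OF g1 h1 x])
    also have "cd_mult (g (cd_one n)) (h (cd_one n)) = g (h (cd_one n))" using g[OF h1] by simp
    finally show "compose (Q n) g h x = cd_mult (compose (Q n) g h (cd_one n)) x"
      using x one_Q by (simp add: compose_def)
  qed
qed

lemma Inn_trivial:
  assumes assoc: "\<And>x y z. x \<in> Q n \<Longrightarrow> y \<in> Q n \<Longrightarrow> z \<in> Q n \<Longrightarrow>
                    cd_mult x (cd_mult y z) = cd_mult (cd_mult x y) z"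
    and comm: "\<And>x y. x \<in> Q n \<Longrightarrow> y \<in> Q n \<Longrightarrow> cd_mult x y = cd_mult y x"
    and f: "f \<in> Inn n" and x: "x \<in> Q n"
  shows "f x = x"
proof -
  have f1: "f \<in> Mlt n" "f (cd_one n) = cd_one n" using f unfolding Inn_def by auto
  have "\<forall>y\<in>Q n. f y = cd_mult (f (cd_one n)) y"
    using assoc comm f1(1) by (rule Mlt_left_translation)
  then show ?thesis using f1(2) x by simp
qed

lemma Q_one: "Q (Suc 0) = {Pr (Sc 1) False, Pr (Sc (-1)) False, Pr (Sc 1) True, Pr (Sc (-1)) True}"
  by auto

lemma Q_one_assoc:
  "x \<in> Q (Suc 0) \<Longrightarrow> y \<in> Q (Suc 0) \<Longrightarrow> z \<in> Q (Suc 0) \<Longrightarrow>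
   cd_mult x (cd_mult y z) = cd_mult (cd_mult x y) z"
  unfolding Q_one by auto

lemma Q_one_comm: "x \<in> Q (Suc 0) \<Longrightarrow> y \<in> Q (Suc 0) \<Longrightarrow> cd_mult x y = cd_mult y x"
  unfolding Q_one by auto

lemma Inn_Q_one_trivial: "f \<in> Inn (Suc 0) \<Longrightarrow> x \<in> Q (Suc 0) \<Longrightarrow> f x = x"
  using Inn_trivial[OF Q_one_assoc Q_one_comm] by blast

section \<open>Counting inner mappings\<close>

definition Imag :: "nat \<Rightarrow> cd set" where
  "Imag n = Pos n - {cd_one n}"

definition flips :: "nat \<Rightarrow> (cd \<Rightarrow> cd) \<Rightarrow> cd set" where
  "flips n f = {x \<in> Imag n. f x = cd_neg x}"

lemma one_Pos: "cd_one n \<in> Pos n"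
  unfolding Pos_def using one_Q negative_one by auto

lemma finite_Imag: "finite (Imag n)"
  unfolding Imag_def using finite_Pos by simp

lemma card_Imag: "card (Imag n) = 2 ^ n - 1"
  unfolding Imag_def using card_Pos one_Pos finite_Pos by (simp add: card_Diff_singleton)

lemma Imag_not_real: "y \<in> Imag n \<Longrightarrow> \<not> cd_real y"
  unfolding Imag_def Pos_def using real_cases negative_neg[OF one_Q] negative_one by blast

lemma sign_changes_Inn: "f \<in> Inn n \<Longrightarrow> sign_changes n f = card (flips n f)"
proof -
  assume f: "f \<in> Inn n"
  have "cd_negative (f x) \<longleftrightarrow> x \<noteq> cd_one n \<and> f x = cd_neg x" if x: "x \<in> Pos n" for x
  proof -
    have xQ: "x \<in> Q n" and pos: "\<not> cd_negative x" using x unfolding Pos_def by auto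
    show ?thesis
      using Inn_sign[OF f xQ] Inn_one[OF f] negative_neg[OF xQ] pos neg_neq[OF xQ] by auto
  qed
  then have "{x \<in> Pos n. cd_negative (f x)} = flips n f" unfolding flips_def Imag_def by auto
  then show ?thesis unfolding sign_changes_def by simp
qed

lemma flips_even: "1 \<le> n \<Longrightarrow> f \<in> Inn n \<Longrightarrow> even (card (flips n f))"
proof (cases "n = 1")
  case True
  assume f: "f \<in> Inn n"
  have "x \<notin> flips n f" for x
  proof
    assume "x \<in> flips n f"
    then have x: "x \<in> Q n" "f x = cd_neg x" unfolding flips_def Imag_def using Pos_Q by auto
    then show False using Inn_Q_one_trivial[of f x] f True neg_neq[OF x(1)] by simp
  qed
  then have "flips n f = {}" by blast
  then show ?thesis by simp
next
  case False
  assume "1 \<le> n" "f \<in> Inn n"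
  then show ?thesis
    using Mlt_sign_changes_even[of n f] sign_changes_Inn False unfolding Inn_def by auto
qed

text \<open>An inner mapping is determined by its flips, since it is odd and fixes 1.\<close>
lemma flips_inj:
  assumes f: "f \<in> Inn n" and g: "g \<in> Inn n" and eq: "flips n f = flips n g"
  shows "f = g"
proof -
  have pos: "f y = g y" if y: "y \<in> Pos n" for y
  proof (cases "y = cd_one n")
    case True then show ?thesis using Inn_one[OF f] Inn_one[OF g] by simp
  next
    case False
    have yQ: "y \<in> Q n" using y Pos_Q by blast
    from False y have "f y = cd_neg y \<longleftrightarrow> g y = cd_neg y"
      using eq unfolding flips_def Imag_def by blast
    then show ?thesis using Inn_sign[OF f yQ] Inn_sign[OF g yQ] neg_neq[OF yQ] by metis
  qed
  show ?thesis
  proof (rule Inn_ext[OF f g])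
    fix x assume x: "x \<in> Q n"
    show "f x = g x"
    proof (cases "cd_negative x")
      case False then show ?thesis using pos x unfolding Pos_def by auto
    next
      case True
      then have "cd_neg x \<in> Pos n" unfolding Pos_def using neg_Q[OF x] negative_neg[OF x] by auto
      then have "cd_neg (f x) = cd_neg (g x)" using pos Inn_neg[OF f x] Inn_neg[OF g x] by metis
      then show ?thesis by (metis neg_neg)
    qed
  qed
qed

lemma flips_mult:
  assumes f: "f \<in> Inn n" and g: "g \<in> Inn n"
  shows "flips n (f \<otimes>\<^bsub>BijGroup (Q n)\<^esub> g) = (flips n f - flips n g) \<union> (flips n g - flips n f)"
proof -
  have "(f (g x) = cd_neg x) \<longleftrightarrow> \<not> ((f x = cd_neg x) \<longleftrightarrow> (g x = cd_neg x))" if x: "x \<in> Q n" for x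
    using Inn_sign[OF f x] Inn_sign[OF g x] Inn_neg[OF f x] neg_neq[OF x] by (metis neg_neg)
  then show ?thesis
    using Inn_Bij[OF f] Inn_Bij[OF g] Pos_Q
    unfolding flips_def Imag_def by (auto simp: BijGroup_def compose_def)
qed

definition Tmap :: "nat \<Rightarrow> cd \<Rightarrow> cd \<Rightarrow> cd" where
  "Tmap n x = inv\<^bsub>BijGroup (Q n)\<^esub> (Rmap n x) \<otimes>\<^bsub>BijGroup (Q n)\<^esub> Lmap n x"

lemma invR_mult: "x \<in> Q n \<Longrightarrow> z \<in> Q n \<Longrightarrow> inv_into (Q n) (Rmap n x) (cd_mult z x) = z"
  using inv_into_f_f[of "Rmap n x" "Q n" z] R_Bij[of x n]
  unfolding Bij_def bij_betw_def Rmap_def by simp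

lemma Tmap_apply:
  assumes x: "x \<in> Q n" and y: "y \<in> Q n"
  shows "Tmap n x y = inv_into (Q n) (Rmap n x) (cd_mult x y)"
proof -
  have BR: "Rmap n x \<in> Bij (Q n)" using R_Bij[OF x] .
  have "inv\<^bsub>BijGroup (Q n)\<^esub> (Rmap n x) \<in> Bij (Q n)"
    unfolding inv_BijGroup[OF BR] by (rule restrict_inv_into_Bij[OF BR])
  then show ?thesis
    unfolding Tmap_def inv_BijGroup[OF BR] using L_Bij[OF x] x y mult_Q[OF x y]
    by (simp add: BijGroup_def compose_def Lmap_def)
qed

lemma Tmap_Inn: "x \<in> Q n \<Longrightarrow> Tmap n x \<in> Inn n"
proof -
  assume x: "x \<in> Q n"
  have "Tmap n x \<in> Mlt n"
    unfolding Tmap_def Mlt_def by (rule generate.eng) (use x in \<open>auto intro: generate.inv generate.incl\<close>)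
  moreover have "Tmap n x (cd_one n) = cd_one n"
    using Tmap_apply[OF x one_Q] invR_mult[OF x one_Q] x by simp
  ultimately show ?thesis unfolding Inn_def by simp
qed

text \<open>\<open>T_x\<close> negates every positive imaginary unit except \<open>x\<close>, by the commutation rule.\<close>
lemma flips_Tmap: "x \<in> Imag n \<Longrightarrow> flips n (Tmap n x) = Imag n - {x}"
proof -
  assume xI: "x \<in> Imag n"
  have x: "x \<in> Q n" "\<not> cd_negative x" "\<not> cd_real x"
    using xI Imag_not_real unfolding Imag_def Pos_def by auto
  have "Tmap n x y = cd_neg y \<longleftrightarrow> y \<noteq> x" if yI: "y \<in> Imag n" for y
  proof -
    have y: "y \<in> Q n" "\<not> cd_negative y" "\<not> cd_real y"
      using yI Imag_not_real unfolding Imag_def Pos_def by auto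
    show ?thesis
    proof (cases "cd_basis x = cd_basis y")
      case True
      then have "y = x" using same_basis[OF x(1) y(1)] x y negative_neg[OF x(1)] by auto
      then show ?thesis using Tmap_apply[OF x(1) y(1)] invR_mult[OF x(1) x(1)] neg_neq[OF y(1)] by simp
    next
      case False
      then have "cd_mult (cd_neg y) x = cd_mult x y" using mult_commute[OF x(1) y(1)] x y by simp
      then show ?thesis
        using False Tmap_apply[OF x(1) y(1)] invR_mult[OF x(1) neg_Q[OF y(1)]] by auto
    qed
  qed
  then show ?thesis using xI unfolding flips_def by auto
qed

text \<open>Every even set of positive imaginary units is the flip set of an inner mapping:
  \<open>T_a T_b\<close> flips exactly \<open>{a, b}\<close>.\<close>
lemma flips_surj: "W \<subseteq> Imag n \<Longrightarrow> even (card W) \<Longrightarrow> \<exists>f\<in>Inn n. flips n f = W"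
proof (induction "card W" arbitrary: W rule: less_induct)
  case less
  have fW: "finite W" using less.prems(1) finite_Imag finite_subset by blast
  show ?case
  proof (cases "W = {}")
    case True
    have "flips n (\<one>\<^bsub>BijGroup (Q n)\<^esub>) = {}"
      unfolding flips_def Imag_def Pos_def by (auto simp: BijGroup_def dest: neg_neq)
    then show ?thesis using True subgroup.one_closed[OF Inn_subgroup] by blast
  next
    case False
    then obtain a where a: "a \<in> W" by blast
    have "odd (card (W - {a}))" using card_Suc_Diff1[OF fW a] less.prems(2) by (metis even_Suc)
    then have "W - {a} \<noteq> {}" by (metis card.empty even_zero)
    then obtain b where b: "b \<in> W" "b \<noteq> a" by blast
    let ?W' = "W - {a, b}"
    have cW: "card W = card ?W' + 2"
      using card_Diff_subset[of "{a, b}" W] card_mono[OF fW, of "{a, b}"] a b by auto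
    then obtain g where g: "g \<in> Inn n" "flips n g = ?W'"
      using less.hyps[of ?W'] less.prems by auto
    have aI: "a \<in> Imag n" and bI: "b \<in> Imag n" using a b less.prems(1) by auto
    have Ta: "Tmap n a \<in> Inn n" and Tb: "Tmap n b \<in> Inn n"
      using Tmap_Inn aI bI unfolding Imag_def Pos_def by auto
    let ?h = "Tmap n a \<otimes>\<^bsub>BijGroup (Q n)\<^esub> Tmap n b"
    have h: "?h \<in> Inn n" using subgroup.m_closed[OF Inn_subgroup Ta Tb] .
    have "flips n ?h = {a, b}"
      unfolding flips_mult[OF Ta Tb] flips_Tmap[OF aI] flips_Tmap[OF bI] using aI bI b by auto
    then have "flips n (?h \<otimes>\<^bsub>BijGroup (Q n)\<^esub> g) = W"
      unfolding flips_mult[OF h g(1)] g(2) using a b by auto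
    then show ?thesis using subgroup.m_closed[OF Inn_subgroup h g(1)] by blast
  qed
qed

text \<open>A nonempty finite set has 2^(card A - 1) subsets of even cardinality: toggling a fixed
  element is a bijection between even and odd subsets.\<close>
lemma card_even_subsets:
  assumes fA: "finite A" and ne: "A \<noteq> {}"
  shows "card {W. W \<subseteq> A \<and> even (card W)} = 2 ^ (card A - 1)"
proof -
  obtain a where a: "a \<in> A" using ne by blast
  let ?E = "{W. W \<subseteq> A \<and> even (card W)}" and ?O = "{W. W \<subseteq> A \<and> odd (card W)}"
  define t where "t = (\<lambda>W. if a \<in> W then W - {a} else insert a W)"
  have parity: "even (card (t W)) \<longleftrightarrow> odd (card W)" if W: "W \<subseteq> A" for W
  proof (cases "a \<in> W")
    case True
    then show ?thesis using card_Suc_Diff1[OF finite_subset[OF W fA] True] unfolding t_def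
      by (metis even_Suc)
  next
    case False
    then show ?thesis using finite_subset[OF W fA] unfolding t_def by simp
  qed
  have t_t: "t (t W) = W" for W unfolding t_def by auto
  have t_sub: "t W \<subseteq> A" if "W \<subseteq> A" for W using a that unfolding t_def by auto
  have "bij_betw t ?E ?O"
    by (rule bij_betw_byWitness[where f' = t]) (use t_t t_sub parity in blast)+
  then have "card ?E = card ?O" by (rule bij_betw_same_card)
  moreover have "card (Pow A) = card ?E + card ?O"
  proof -
    have "Pow A = ?E \<union> ?O" by auto
    then show ?thesis using fA by (simp add: card_Un_disjoint disjoint_iff)
  qed
  moreover have "card A \<ge> 1" using card_mono[of A "{a}"] fA a by simp
  ultimately show ?thesis using card_Pow[of A] fA by (cases "card A") auto
qed

lemma card_Inn: "1 \<le> n \<Longrightarrow> card (Inn n) = 2 ^ (2 ^ n - 2)"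
proof -
  assume n: "1 \<le> n"
  have "bij_betw (flips n) (Inn n) {W. W \<subseteq> Imag n \<and> even (card W)}"
    unfolding bij_betw_def
  proof
    show "inj_on (flips n) (Inn n)" by (rule inj_onI) (rule flips_inj)
    have "flips n f \<subseteq> Imag n" for f unfolding flips_def by blast
    then show "flips n ` Inn n = {W. W \<subseteq> Imag n \<and> even (card W)}"
      using flips_even[OF n] flips_surj by blast
  qed
  then have "card (Inn n) = card {W. W \<subseteq> Imag n \<and> even (card W)}" by (rule bij_betw_same_card)
  also have "\<dots> = 2 ^ (card (Imag n) - 1)"
  proof (rule card_even_subsets[OF finite_Imag])
    have "card (Imag n) \<noteq> 0" using one_less_power[of "2::nat" n] n unfolding card_Imag by simp
    then show "Imag n \<noteq> {}" by auto
  qed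
  also have "\<dots> = 2 ^ (2 ^ n - 2)" unfolding card_Imag by simp
  finally show ?thesis .
qed

theorem mainTheorem5:
  fixes n :: nat
  assumes "n \<ge> 1"
  shows "comm_group (InnGroup n)
       \<and> (\<forall>f \<in> carrier (InnGroup n). f \<otimes>\<^bsub>InnGroup n\<^esub> f = \<one>\<^bsub>InnGroup n\<^esub>)
       \<and> order (InnGroup n) = 2 ^ (2 ^ n - 2)
       \<and> (\<forall>f \<in> Inn n. \<forall>x \<in> Q n. f x = x \<or> f x = cd_neg x)"
proof (intro conjI ballI)
  show "comm_group (InnGroup n)" by (rule InnGroup_comm_group)
  show "f \<otimes>\<^bsub>InnGroup n\<^esub> f = \<one>\<^bsub>InnGroup n\<^esub>" if "f \<in> carrier (InnGroup n)" for f
    using that by (rule InnGroup_square)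
  show "order (InnGroup n) = 2 ^ (2 ^ n - 2)"
    unfolding order_def InnGroup_def using card_Inn[OF assms] by simp
  show "f x = x \<or> f x = cd_neg x" if "f \<in> Inn n" "x \<in> Q n" for f x
    using Inn_sign that by blast
qed

end
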